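(* For every $\alpha>0$ the function $e^{-\alpha\Omega}$ is integrable on the Atiyah–Hitchin manifold $M_{AH}$ with respect to the Riemannian volume form, i.e. $$\int_{(0,1)\times SO(3)}e^{-\alpha\Omega}\,\frac{\beta^2\gamma^2\delta^2}{4k^2(1-k^2)K^2}\,dm\,\sigma_x\sigma_y\sigma_z<\infty .$$
   Context: The Atiyah–Hitchin manifold $M_{AH}$ (moduli of centred charge-2 monopoles on $\mathbb{R}^3$) contains an open dense subset identified with $(0,1)\times SO(3)/K_4$ ($K_4$ the Klein four-group), with parameter $k\in(0,1)$ and coordinate $m=k^2$, on which the metric is $$ds^2=\frac{\beta^2\gamma^2\delta^2}{(4k^2(1-k^2)K^2)^2}dm^2+\beta^2\sigma_x^2+\gamma^2\sigma_y^2+\delta^2\sigma_z^2,$$ where $(\sigma_x,\sigma_y,\sigma_z)$ is an orthonormal left-invariant coframe on $SO(3)$, $K=K(k)=\int_0^{\pi/2}(1-k^2\sin^2\phi)^{-1/2}d\phi$ and $E=E(k)=\int_0^{\pi/2}(1-k^2\sin^2\phi)^{1/2}d\phi$ are the complete elliptic integrals, and $\beta,\gamma,\delta$ are determined by $\beta\gamma=-EK$, $\gamma\delta=-EK+K^2$, $\beta\delta=-EK+(1-k^2)K^2$. Thus the volume form is $\frac{\beta^2\gamma^2\delta^2}{4k^2(1-k^2)K^2}dm\,\sigma_x\sigma_y\sigma_z$. In Euler angles $(\varphi,\theta,\psi)$ on $SO(3)$, Olivier's Kähler potential for the complex structure $I_3$ is $$\Omega=\frac{\beta\gamma+\gamma\delta+\delta\beta}{8}+\frac18\big(\gamma\delta\sin^2\theta\cos^2\psi+\delta\beta\sin^2\theta\sin^2\psi+\gamma\beta\cos^2\theta\big),$$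 which extends continuously to $M_{AH}$. *)

theory Defs
  imports "HOL-Analysis.Analysis"
begin

definition ellK :: "real \<Rightarrow> real" where
  "ellK k = integral {0..pi/2} (\<lambda>\<phi>. 1 / sqrt (1 - k^2 * (sin \<phi>)^2))"

definition ellE :: "real \<Rightarrow> real" where
  "ellE k = integral {0..pi/2} (\<lambda>\<phi>. sqrt (1 - k^2 * (sin \<phi>)^2))"

text \<open>The products beta*gamma, gamma*delta, beta*delta as functions of k.\<close>
definition AH_bg :: "real \<Rightarrow> real" where
  "AH_bg k = - ellE k * ellK k"

definition AH_gd :: "real \<Rightarrow> real" where
  "AH_gd k = - ellE k * ellK k + (ellK k)^2"

definition AH_bd :: "real \<Rightarrow> real" where
  "AH_bd k = - ellE k * ellK k + (1 - k^2) * (ellK k)^2"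

definition AH_b2g2d2 :: "real \<Rightarrow> real" where
  "AH_b2g2d2 k = AH_bg k * AH_gd k * AH_bd k"

text \<open>Density of the volume form w.r.t. dm sigma_x sigma_y sigma_z, with m = k^2.\<close>
definition AH_vol :: "real \<Rightarrow> real" where
  "AH_vol k = AH_b2g2d2 k / (4 * k^2 * (1 - k^2) * (ellK k)^2)"

text \<open>Olivier's Kaehler potential in Euler angles (independent of the first angle).\<close>
definition AH_Omega :: "real \<Rightarrow> real \<Rightarrow> real \<Rightarrow> real" where
  "AH_Omega k \<theta> \<psi> =
     (AH_bg k + AH_gd k + AH_bd k) / 8
     + (AH_gd k * (sin \<theta>)^2 * (cos \<psi>)^2 + AH_bd k * (sin \<theta>)^2 * (sin \<psi>)^2
        + AH_bg k * (cos \<theta>)^2) / 8"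

text \<open>Parameter domain: m in (0,1), Euler angles (phi, theta, psi) covering SO(3).
  The left-invariant volume sigma_x sigma_y sigma_z equals sin(theta) dphi dtheta dpsi.\<close>
definition AH_domain :: "(real \<times> real \<times> real \<times> real) set" where
  "AH_domain = {0<..<1} \<times> {0..2*pi} \<times> {0..pi} \<times> {0..2*pi}"

definition AH_integrand :: "real \<Rightarrow> real \<times> real \<times> real \<times> real \<Rightarrow> real" where
  "AH_integrand \<alpha> x = (case x of (m, \<phi>, \<theta>, \<psi>) \<Rightarrow>
      exp (- \<alpha> * AH_Omega (sqrt m) \<theta> \<psi>) * AH_vol (sqrt m) * sin \<theta>)"

end

theory Submission
  imports Defs
begin

text \<open>The domain is bounded and the integrand continuous on it, so it suffices to bound the
  integrand. Write \<open>c = sqrt (1 - k^2)\<close> and \<open>L = - ln c\<close>. As \<open>k \<rightarrow> 1\<close> the volume density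
  grows at most like \<open>c^-5 = exp (5 L)\<close>, while \<open>K \<ge> L\<close> and \<open>\<Omega> \<ge> K^2/16 - 25/4\<close> make
  \<open>exp (- \<alpha> \<Omega>)\<close> decay like \<open>exp (- \<alpha> L^2/16)\<close>, which wins. All estimates on \<open>K\<close> and \<open>E\<close>
  come from comparing their integrands pointwise; in particular \<open>K - E\<close> and \<open>E - (1 - k^2) K\<close>
  are integrals of \<open>k^2 sin^2\<close> and \<open>k^2 cos^2\<close> against the integrand of \<open>K\<close>.\<close>

lemma elliptic_radicand_pos:
  fixes k x :: real
  assumes "\<bar>k\<bar> < 1"
  shows "0 < 1 - k^2 * (sin x)^2"
proof -
  have "(sin x)^2 \<le> 1"
    by (simp add: abs_square_le_1 abs_sin_le_one)
  then have "k^2 * (sin x)^2 \<le> k^2"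
    by (simp add: mult_left_le)
  moreover have "k^2 < 1"
    using assms by (simp add: abs_square_less_1)
  ultimately show ?thesis by linarith
qed

lemma ellK_integrable:
  fixes k c :: real
  assumes "\<bar>k\<bar> < 1"
  shows "(\<lambda>\<phi>. c / sqrt (1 - k^2 * (sin \<phi>)^2)) integrable_on {0..pi/2}"
  using elliptic_radicand_pos[OF assms]
  by (intro integrable_continuous_interval continuous_intros) (auto simp: less_le)

lemma ellE_integrable:
  fixes k :: real
  shows "(\<lambda>\<phi>. sqrt (1 - k^2 * (sin \<phi>)^2)) integrable_on {0..pi/2}"
  by (intro integrable_continuous_interval continuous_intros)

lemma integral_ellK_scaled:
  fixes k c :: real
  shows "integral {0..pi/2} (\<lambda>\<phi>. c / sqrt (1 - k^2 * (sin \<phi>)^2)) = c * ellK k"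
  using integral_mult_right[of "{0..pi/2}" c "\<lambda>\<phi>. 1 / sqrt (1 - k^2 * (sin \<phi>)^2)"]
  by (simp add: ellK_def)

lemma ellE_bounds:
  fixes k :: real
  assumes "\<bar>k\<bar> < 1"
  shows "0 \<le> ellE k" "ellE k \<le> pi/2"
proof -
  have "0 \<le> 1 - k^2 * (sin \<phi>)^2" "1 - k^2 * (sin \<phi>)^2 \<le> 1" for \<phi>
    using elliptic_radicand_pos[OF assms, of \<phi>] by auto
  then show "0 \<le> ellE k" "ellE k \<le> pi/2"
    using integral_le[OF ellE_integrable[of k] integrable_const_ivl[of 1 0 "pi/2"]]
    by (auto simp: ellE_def intro!: integral_nonneg[OF ellE_integrable])
qed

lemma ellK_le:
  fixes k :: real
  assumes "\<bar>k\<bar> < 1"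
  shows "ellK k \<le> (pi/2) / sqrt (1 - k^2)"
proof -
  have "1 / sqrt (1 - k^2 * (sin \<phi>)^2) \<le> 1 / sqrt (1 - k^2)" for \<phi>
  proof -
    have "(sin \<phi>)^2 \<le> 1"
      by (simp add: abs_square_le_1 abs_sin_le_one)
    then have "1 - k^2 \<le> 1 - k^2 * (sin \<phi>)^2"
      by (simp add: mult_left_le)
    moreover have "0 < 1 - k^2"
      using assms by (simp add: abs_square_less_1)
    ultimately show ?thesis
      by (intro divide_left_mono) auto
  qed
  then have "ellK k \<le> integral {0..pi/2} (\<lambda>\<phi>. 1 / sqrt (1 - k^2))"
    unfolding ellK_def by (intro integral_le ellK_integrable[OF assms] integrable_const_ivl)
  then show ?thesis by simp
qed

lemma elliptic_weighted_integral_bounds: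
  fixes k :: real and w :: "real \<Rightarrow> real"
  assumes "\<bar>k\<bar> < 1" and "continuous_on {0..pi/2} w"
    and "\<And>\<phi>. \<phi> \<in> {0..pi/2} \<Longrightarrow> 0 \<le> w \<phi> \<and> w \<phi> \<le> 1"
  shows "(\<lambda>\<phi>. k^2 * w \<phi> / sqrt (1 - k^2 * (sin \<phi>)^2)) integrable_on {0..pi/2}"
    and "0 \<le> integral {0..pi/2} (\<lambda>\<phi>. k^2 * w \<phi> / sqrt (1 - k^2 * (sin \<phi>)^2))"
    and "integral {0..pi/2} (\<lambda>\<phi>. k^2 * w \<phi> / sqrt (1 - k^2 * (sin \<phi>)^2)) \<le> k^2 * ellK k"
proof -
  show int: "(\<lambda>\<phi>. k^2 * w \<phi> / sqrt (1 - k^2 * (sin \<phi>)^2)) integrable_on {0..pi/2}"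
    using elliptic_radicand_pos[OF assms(1)] assms(2)
    by (intro integrable_continuous_interval continuous_intros) (auto simp: less_le)
  show "0 \<le> integral {0..pi/2} (\<lambda>\<phi>. k^2 * w \<phi> / sqrt (1 - k^2 * (sin \<phi>)^2))"
    using assms(3) elliptic_radicand_pos[OF assms(1)] by (intro integral_nonneg int) (simp add: less_imp_le)
  have "integral {0..pi/2} (\<lambda>\<phi>. k^2 * w \<phi> / sqrt (1 - k^2 * (sin \<phi>)^2))
      \<le> integral {0..pi/2} (\<lambda>\<phi>. k^2 / sqrt (1 - k^2 * (sin \<phi>)^2))"
    using assms(3) elliptic_radicand_pos[OF assms(1)]
    by (intro integral_le int ellK_integrable[OF assms(1)] divide_right_mono mult_left_le)
       (auto simp: less_imp_le)
  then show "integral {0..pi/2} (\<lambda>\<phi>. k^2 * w \<phi> / sqrt (1 - k^2 * (sin \<phi>)^2)) \<le> k^2 * ellK k"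
    by (simp only: integral_ellK_scaled)
qed

lemma ellK_minus_ellE:
  fixes k :: real
  assumes "\<bar>k\<bar> < 1"
  shows "ellK k - ellE k = integral {0..pi/2} (\<lambda>\<phi>. k^2 * (sin \<phi>)^2 / sqrt (1 - k^2 * (sin \<phi>)^2))"
proof -
  have "1 / sqrt (1 - k^2 * (sin \<phi>)^2) - sqrt (1 - k^2 * (sin \<phi>)^2)
      = k^2 * (sin \<phi>)^2 / sqrt (1 - k^2 * (sin \<phi>)^2)" for \<phi>
    using elliptic_radicand_pos[OF assms, of \<phi>] by (simp add: field_simps)
  then show ?thesis
    unfolding ellK_def ellE_def
    by (simp add: integral_diff[symmetric] ellK_integrable[OF assms] ellE_integrable)
qed

lemma ellE_minus_ellK:
  fixes k :: real
  assumes "\<bar>k\<bar> < 1"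
  shows "ellE k - (1 - k^2) * ellK k
    = integral {0..pi/2} (\<lambda>\<phi>. k^2 * (cos \<phi>)^2 / sqrt (1 - k^2 * (sin \<phi>)^2))"
proof -
  have "sqrt (1 - k^2 * (sin \<phi>)^2) - (1 - k^2) / sqrt (1 - k^2 * (sin \<phi>)^2)
      = k^2 * (cos \<phi>)^2 / sqrt (1 - k^2 * (sin \<phi>)^2)" for \<phi>
    using elliptic_radicand_pos[OF assms, of \<phi>] by (simp add: field_simps cos_squared_eq)
  then show ?thesis
    unfolding ellE_def integral_ellK_scaled[symmetric]
    by (simp add: integral_diff[symmetric] ellK_integrable[OF assms] ellE_integrable)
qed

lemma ellK_minus_ellE_bounds:
  fixes k :: real
  assumes "\<bar>k\<bar> < 1"
  shows "0 \<le> ellK k - ellE k" "ellK k - ellE k \<le> k^2 * ellK k"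
  unfolding ellK_minus_ellE[OF assms]
  by (intro elliptic_weighted_integral_bounds assms continuous_intros;
      simp add: abs_square_le_1 abs_sin_le_one)+

lemma ellE_minus_ellK_bounds:
  fixes k :: real
  assumes "\<bar>k\<bar> < 1"
  shows "0 \<le> ellE k - (1 - k^2) * ellK k" "ellE k - (1 - k^2) * ellK k \<le> k^2 * ellK k"
  unfolding ellE_minus_ellK[OF assms]
  by (intro elliptic_weighted_integral_bounds assms continuous_intros;
      simp add: abs_square_le_1 abs_cos_le_one)+

lemma elliptic_radicand_le:
  fixes k x :: real
  assumes "\<bar>k\<bar> < 1" and "x \<in> {0..pi/2}"
  shows "1 - k^2 * (sin x)^2 \<le> (sqrt (1 - k^2) + (pi/2 - x))^2"
proof -
  define c where "c = sqrt (1 - k^2)"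
  have c: "0 \<le> c" "c^2 = 1 - k^2"
    using assms(1) by (auto simp: c_def abs_square_less_1 less_imp_le)
  have "cos x = sin (pi/2 - x)"
    by (simp add: sin_cos_eq)
  also have "\<dots> \<le> pi/2 - x"
    using assms(2) by (intro sin_x_le_x) auto
  finally have "(cos x)^2 \<le> (pi/2 - x)^2"
    using assms(2) by (intro power_mono cos_ge_zero) auto
  moreover have "k^2 * (cos x)^2 \<le> (cos x)^2"
    using assms(1) by (intro mult_left_le_one_le) (auto simp: abs_square_le_1 less_imp_le)
  moreover have "0 \<le> c * (pi/2 - x)"
    using c assms(2) by simp
  ultimately show ?thesis
    unfolding c_def[symmetric] power2_sum c(2) sin_squared_eq by (simp add: algebra_simps)
qed

lemma ellK_ge_neg_ln:
  fixes k :: real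
  assumes "\<bar>k\<bar> < 1"
  shows "- ln (sqrt (1 - k^2)) \<le> ellK k"
proof -
  define c where "c = sqrt (1 - k^2)"
  have c: "0 < c"
    using assms by (simp add: c_def abs_square_less_1)
  have log_integral: "((\<lambda>x. 1 / (c + (pi/2 - x))) has_integral (ln (c + pi/2) - ln c)) {0..pi/2}"
  proof -
    have "((\<lambda>x. - ln (c + (pi/2 - x))) has_real_derivative 1 / (c + (pi/2 - x))) (at x within {0..pi/2})"
      if "x \<in> {0..pi/2}" for x
      using that c by (auto intro!: derivative_eq_intros simp: field_simps)
    then show ?thesis
      using fundamental_theorem_of_calculus[of 0 "pi/2" "\<lambda>x. - ln (c + (pi/2 - x))"]
      by (simp add: has_real_derivative_iff_has_vector_derivative)
  qed
  have "- ln c \<le> ln (c + pi/2) - ln c"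
    using c pi_gt3 by simp
  also have "\<dots> = integral {0..pi/2} (\<lambda>x. 1 / (c + (pi/2 - x)))"
    using log_integral by (simp add: integral_unique)
  also have "\<dots> \<le> ellK k"
    unfolding ellK_def
  proof (intro integral_le has_integral_integrable[OF log_integral] ellK_integrable[OF assms])
    fix x :: real assume x: "x \<in> {0..pi/2}"
    have "sqrt (1 - k^2 * (sin x)^2) \<le> c + (pi/2 - x)"
      using elliptic_radicand_le[OF assms x] c x by (simp add: c_def real_sqrt_le_iff real_le_lsqrt)
    then show "1 / (c + (pi/2 - x)) \<le> 1 / sqrt (1 - k^2 * (sin x)^2)"
      using elliptic_radicand_pos[OF assms, of x] c x by (intro divide_left_mono) auto
  qed
  finally show ?thesis
    unfolding c_def .
qed

lemma ellK_pos:
  fixes k :: real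
  assumes "\<bar>k\<bar> < 1"
  shows "0 < ellK k"
proof -
  have "ellK k \<ge> pi/2"
  proof -
    have "1 \<le> 1 / sqrt (1 - k^2 * (sin \<phi>)^2)" for \<phi>
      using elliptic_radicand_pos[OF assms, of \<phi>] by (simp add: real_sqrt_le_1_iff)
    then have "integral {0..pi/2} (\<lambda>\<phi>. 1::real) \<le> ellK k"
      unfolding ellK_def by (intro integral_le ellK_integrable[OF assms] integrable_const_ivl)
    then show ?thesis by simp
  qed
  then show ?thesis
    using pi_gt_zero by linarith
qed

lemma continuous_on_ellK_sqrt: "continuous_on {0<..<1} (\<lambda>m. ellK (sqrt m))"
proof -
  have "continuous_on ({0<..<1} \<times> cbox 0 (pi/2)) (\<lambda>(m, \<phi>). 1 / sqrt (1 - (sqrt m)^2 * (sin \<phi>)^2))"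
  proof (unfold case_prod_beta, intro continuous_intros ballI)
    fix p :: "real \<times> real" assume "p \<in> {0<..<1} \<times> cbox 0 (pi/2)"
    then have "\<bar>sqrt (fst p)\<bar> < 1"
      by (auto simp: mem_Times_iff)
    then show "sqrt (1 - (sqrt (fst p))^2 * (sin (snd p))^2) \<noteq> 0"
      using elliptic_radicand_pos[of "sqrt (fst p)" "snd p"] by simp
  qed
  then show ?thesis
    unfolding ellK_def cbox_interval[symmetric] by (rule integral_continuous_on_param)
qed

lemma continuous_on_ellE_sqrt: "continuous_on {0<..<1} (\<lambda>m. ellE (sqrt m))"
proof -
  have "continuous_on ({0<..<1} \<times> cbox 0 (pi/2)) (\<lambda>(m, \<phi>). sqrt (1 - (sqrt m)^2 * (sin \<phi>)^2))"
    by (simp add: case_prod_beta) (intro continuous_intros)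
  then show ?thesis
    unfolding ellE_def cbox_interval[symmetric] by (rule integral_continuous_on_param)
qed

lemma AH_b2g2d2_factor:
  "AH_b2g2d2 k = (ellE k * ellK k) * (ellK k * (ellK k - ellE k)) * (ellK k * (ellE k - (1 - k^2) * ellK k))"
  unfolding AH_b2g2d2_def AH_bg_def AH_gd_def AH_bd_def by (simp add: algebra_simps power2_eq_square)

lemma AH_Omega_ge:
  fixes k :: real
  assumes "\<bar>k\<bar> < 1"
  shows "(ellK k)^2 / 16 - 25/4 \<le> AH_Omega k \<theta> \<psi>"
proof -
  define K E where "K = ellK k" and "E = ellE k"
  have K: "0 \<le> K" and E: "0 \<le> E" "E \<le> 2"
    using ellK_pos[OF assms] ellE_bounds[OF assms] pi_less_4 by (auto simp: K_def E_def)
  have bg: "AH_bg k \<le> 0"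
    using E K by (simp add: AH_bg_def K_def E_def)
  have "AH_gd k = K * (K - E)"
    by (simp add: AH_gd_def K_def E_def power2_eq_square algebra_simps)
  then have gd: "0 \<le> AH_gd k"
    using ellK_minus_ellE_bounds(1)[OF assms] K by (simp add: K_def E_def)
  have "AH_bd k = - (K * (E - (1 - k^2) * K))"
    by (simp add: AH_bd_def K_def E_def power2_eq_square algebra_simps)
  then have bd: "AH_bd k \<le> 0"
    using ellE_minus_ellK_bounds(1)[OF assms] K by (simp add: K_def E_def)
  have weights: "0 \<le> (sin \<theta>)^2 * (cos \<psi>)^2" "(sin \<theta>)^2 * (sin \<psi>)^2 \<le> 1" "(cos \<theta>)^2 \<le> 1"
    by (auto simp: abs_square_le_1 abs_sin_le_one abs_cos_le_one intro: mult_le_one)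
  have "2 * AH_bg k + AH_gd k + 2 * AH_bd k \<le> 8 * AH_Omega k \<theta> \<psi>"
  proof -
    have "AH_bd k \<le> AH_bd k * (sin \<theta>)^2 * (sin \<psi>)^2"
      using bd weights(2) by (simp add: mult_le_cancel_left1 mult.assoc)
    moreover have "AH_bg k \<le> AH_bg k * (cos \<theta>)^2"
      using bg weights(3) by (simp add: mult_le_cancel_left1)
    moreover have "0 \<le> AH_gd k * (sin \<theta>)^2 * (cos \<psi>)^2"
      using gd weights(1) by (simp add: mult.assoc)
    ultimately show ?thesis
      unfolding AH_Omega_def by (simp add: field_simps)
  qed
  moreover have "2 * AH_bg k + AH_gd k + 2 * AH_bd k = K^2 + 2 * (1 - k^2) * K^2 - 5 * (E * K)"
    by (simp add: AH_bg_def AH_gd_def AH_bd_def K_def E_def algebra_simps)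
  moreover have "0 \<le> (1 - k^2) * K^2"
    using assms by (simp add: abs_square_le_1 less_imp_le)
  moreover have "E * K \<le> 2 * K"
    using E K by (simp add: mult_right_mono)
  moreover have "K^2 / 2 - 50 \<le> K^2 - 10 * K"
    using zero_le_power2[of "K - 10"] by (simp add: power2_eq_square algebra_simps)
  ultimately show ?thesis
    unfolding K_def by linarith
qed

lemma AH_b2g2d2_bounds:
  fixes k :: real
  assumes "\<bar>k\<bar> < 1"
  shows "0 \<le> AH_b2g2d2 k" "AH_b2g2d2 k \<le> 2 * k^4 * (ellK k)^5"
proof -
  define K E where "K = ellK k" and "E = ellE k"
  have K: "0 \<le> K" and E: "0 \<le> E" "E \<le> 2"
    using ellK_pos[OF assms] ellE_bounds[OF assms] pi_less_4 by (auto simp: K_def E_def)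
  have f1: "0 \<le> E * K" "E * K \<le> 2 * K"
    using E K by (auto intro: mult_right_mono)
  have f2: "0 \<le> K * (K - E)" "K * (K - E) \<le> K * (k^2 * K)"
    using ellK_minus_ellE_bounds[OF assms] K by (auto simp: K_def[symmetric] E_def[symmetric] mult_left_mono)
  have f3: "0 \<le> K * (E - (1 - k^2) * K)" "K * (E - (1 - k^2) * K) \<le> K * (k^2 * K)"
    using ellE_minus_ellK_bounds[OF assms] K by (auto simp: K_def[symmetric] E_def[symmetric] mult_left_mono)
  show "0 \<le> AH_b2g2d2 k"
    using f1 f2 f3 by (simp add: AH_b2g2d2_factor K_def[symmetric] E_def[symmetric])
  have "AH_b2g2d2 k \<le> (2 * K) * (K * (k^2 * K)) * (K * (k^2 * K))"
    unfolding AH_b2g2d2_factor K_def[symmetric] E_def[symmetric]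
    by (rule mult_mono[OF mult_mono[OF f1(2) f2(2)] f3(2)]) (use f1 f2 f3 K in auto)
  then show "AH_b2g2d2 k \<le> 2 * k^4 * (ellK k)^5"
    by (simp add: K_def eval_nat_numeral algebra_simps)
qed

lemma AH_vol_nonneg:
  fixes k :: real
  assumes "\<bar>k\<bar> < 1"
  shows "0 \<le> AH_vol k"
  using AH_b2g2d2_bounds(1)[OF assms] assms
  by (simp add: AH_vol_def abs_square_le_1 less_imp_le)

lemma AH_vol_le:
  fixes k :: real
  assumes "\<bar>k\<bar> < 1"
  shows "AH_vol k \<le> 4 / (sqrt (1 - k^2))^5"
proof (cases "k = 0")
  case True
  then show ?thesis by (simp add: AH_vol_def)
next
  case False
  define K c where "K = ellK k" and "c = sqrt (1 - k^2)"
  have k: "0 < k^2" "k^2 < 1"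
    using False assms by (auto simp: abs_square_less_1)
  have c: "0 < c" "c^2 = 1 - k^2"
    using k by (auto simp: c_def)
  have "K \<le> (pi/2) / c"
    using ellK_le[OF assms] by (simp add: K_def c_def)
  also have "\<dots> \<le> 2 / c"
    using c pi_less_4 by (intro divide_right_mono) auto
  finally have K: "0 < K" "K \<le> 2 / c"
    using ellK_pos[OF assms] by (auto simp: K_def)
  have "AH_vol k \<le> 2 * k^4 * K^5 / (4 * k^2 * c^2 * K^2)"
    unfolding AH_vol_def K_def c(2)
    using AH_b2g2d2_bounds(2)[OF assms] k c K by (intro divide_right_mono) (auto simp: K_def)
  also have "\<dots> = k^2 * K^3 / (2 * c^2)"
    using k c K by (simp add: field_simps eval_nat_numeral)
  also have "\<dots> \<le> K^3 / (2 * c^2)"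
    using k K by (intro divide_right_mono mult_left_le_one_le) auto
  also have "\<dots> \<le> (2 / c)^3 / (2 * c^2)"
    using K by (intro divide_right_mono power_mono) auto
  also have "\<dots> = 4 / c^5"
    using c by (simp add: field_simps eval_nat_numeral)
  finally show ?thesis
    unfolding c_def .
qed

lemma AH_density_bounded:
  fixes k \<alpha> :: real
  assumes "\<bar>k\<bar> < 1" and "0 < \<alpha>"
  shows "\<bar>exp (- \<alpha> * AH_Omega k \<theta> \<psi>) * AH_vol k * sin \<theta>\<bar> \<le> 4 * exp (25/4 * \<alpha> + 100 / \<alpha>)"
proof -
  define L where "L = - ln (sqrt (1 - k^2))"
  have k: "k^2 < 1"
    using assms(1) by (simp add: abs_square_less_1)
  have L: "0 \<le> L" "L \<le> ellK k"
    using ellK_ge_neg_ln[OF assms(1)] k by (auto simp: L_def)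
  have vol: "AH_vol k \<le> 4 * exp (5 * L)"
  proof -
    have "sqrt (1 - k^2) = exp (- L)"
      using k by (simp add: L_def)
    then have "(sqrt (1 - k^2))^5 = exp (- (5 * L))"
      using exp_of_nat_mult[of 5 "- L"] by simp
    then have "4 / (sqrt (1 - k^2))^5 = 4 * exp (5 * L)"
      by (simp add: exp_minus divide_inverse)
    then show ?thesis
      using AH_vol_le[OF assms(1)] by simp
  qed
  have "L^2 \<le> (ellK k)^2"
    using L by (simp add: power_mono)
  then have "L^2 / 16 - 25/4 \<le> AH_Omega k \<theta> \<psi>"
    using AH_Omega_ge[OF assms(1), of \<theta> \<psi>] by linarith
  then have "\<alpha> * (L^2 / 16 - 25/4) \<le> \<alpha> * AH_Omega k \<theta> \<psi>"
    using assms(2) by (intro mult_left_mono) auto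
  then have "- \<alpha> * AH_Omega k \<theta> \<psi> \<le> \<alpha> * (25/4 - L^2 / 16)"
    by (simp add: algebra_simps)
  then have Omega: "exp (- \<alpha> * AH_Omega k \<theta> \<psi>) \<le> exp (\<alpha> * (25/4 - L^2 / 16))"
    by simp
  have "\<bar>exp (- \<alpha> * AH_Omega k \<theta> \<psi>) * AH_vol k * sin \<theta>\<bar>
      \<le> exp (- \<alpha> * AH_Omega k \<theta> \<psi>) * AH_vol k"
    using AH_vol_nonneg[OF assms(1)] by (simp add: abs_mult mult_left_le abs_sin_le_one)
  also have "\<dots> \<le> exp (\<alpha> * (25/4 - L^2 / 16)) * (4 * exp (5 * L))"
    using AH_vol_nonneg[OF assms(1)] by (intro mult_mono Omega vol) auto
  also have "\<dots> = 4 * exp (25/4 * \<alpha> + (5 * L - \<alpha> * L^2 / 16))"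
    by (simp add: exp_add[symmetric] algebra_simps)
  also have "\<dots> \<le> 4 * exp (25/4 * \<alpha> + 100 / \<alpha>)"
  proof -
    \<comment> \<open>completing the square: \<open>\<alpha> (100/\<alpha> - 5 L + \<alpha> L^2/16) = (\<alpha> L/4 - 10)^2\<close>\<close>
    have "\<alpha> * (5 * L - \<alpha> * L^2 / 16) \<le> 100"
      using zero_le_power2[of "\<alpha> * L / 4 - 10"] by (simp add: power2_eq_square algebra_simps)
    then have "5 * L - \<alpha> * L^2 / 16 \<le> 100 / \<alpha>"
      using assms(2) by (simp add: field_simps mult.commute)
    then show ?thesis by simp
  qed
  finally show ?thesis .
qed

lemma continuous_on_AH_integrand: "continuous_on AH_domain (AH_integrand \<alpha>)"
proof -
  have m: "fst x \<in> {0<..<1}" if "x \<in> AH_domain" for x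
    using that by (auto simp: AH_domain_def)
  have cK: "continuous_on AH_domain (\<lambda>x. ellK (sqrt (fst x)))"
    and cE: "continuous_on AH_domain (\<lambda>x. ellE (sqrt (fst x)))"
    using m by (auto intro!: continuous_on_compose2[OF continuous_on_ellK_sqrt]
        continuous_on_compose2[OF continuous_on_ellE_sqrt] continuous_intros)
  have denominator: "4 * (sqrt (fst x))^2 * (1 - (sqrt (fst x))^2) * (ellK (sqrt (fst x)))^2 \<noteq> 0"
    if "x \<in> AH_domain" for x
    using m[OF that] ellK_pos[of "sqrt (fst x)"] by auto
  have integrand: "AH_integrand \<alpha> = (\<lambda>x. exp (- \<alpha> * AH_Omega (sqrt (fst x)) (fst (snd (snd x))) (snd (snd (snd x))))
       * AH_vol (sqrt (fst x)) * sin (fst (snd (snd x))))"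
    by (auto simp: AH_integrand_def fun_eq_iff split: prod.splits)
  show ?thesis
    unfolding integrand AH_Omega_def AH_vol_def AH_b2g2d2_def AH_bg_def AH_gd_def AH_bd_def
    by (intro continuous_intros cK cE) (use denominator in auto)
qed

lemma set_integrable_bounded_continuous:
  fixes f :: "'a::euclidean_space \<Rightarrow> real"
  assumes "S \<in> sets borel" and "bounded S" and "continuous_on S f"
    and "\<And>x. x \<in> S \<Longrightarrow> \<bar>f x\<bar> \<le> C"
  shows "set_integrable lborel S f"
  unfolding set_integrable_def
proof (rule Bochner_Integration.integrable_bound)
  show "integrable lborel (\<lambda>x. indicator S x * C)"
    using emeasure_bounded_finite[OF assms(2)] assms(1) by (intro integrable_mult_left) auto
  show "(\<lambda>x. indicator S x *\<^sub>R f x) \<in> borel_measurable lborel"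
    using borel_measurable_continuous_on_indicator[OF assms(1,3)] by simp
  show "AE x in lborel. norm (indicator S x *\<^sub>R f x) \<le> norm (indicator S x * C)"
    by (intro AE_I2) (auto simp: indicator_def intro: order_trans[OF assms(4) abs_ge_self])
qed

lemma AH_domain_borel: "AH_domain \<in> sets borel"
proof -
  have "AH_domain = ({0<..<1} \<times> UNIV) \<inter> (UNIV \<times> ({0..2*pi} \<times> {0..pi} \<times> {0..2*pi}))"
    unfolding AH_domain_def by auto
  moreover have "open ({0<..<1::real} \<times> (UNIV :: (real \<times> real \<times> real) set))"
    by (intro open_Times) auto
  moreover have "closed ((UNIV :: real set) \<times> ({0..2*pi} \<times> {0..pi} \<times> {0..2*pi::real}))"
    by (intro closed_Times) auto
  ultimately show ?thesis
    by (metis borel_open borel_closed sets.Int)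
qed

lemma bounded_AH_domain: "bounded AH_domain"
  unfolding AH_domain_def by (intro bounded_Times) auto

theorem mainTheorem11:
  fixes \<alpha> :: real
  assumes "\<alpha> > 0"
  shows "set_integrable lborel AH_domain (AH_integrand \<alpha>)"
proof (rule set_integrable_bounded_continuous[OF AH_domain_borel bounded_AH_domain continuous_on_AH_integrand])
  fix x assume "x \<in> AH_domain"
  then obtain m \<phi> \<theta> \<psi> where x: "x = (m, \<phi>, \<theta>, \<psi>)" and "\<bar>sqrt m\<bar> < 1"
    by (auto simp: AH_domain_def)
  then show "\<bar>AH_integrand \<alpha> x\<bar> \<le> 4 * exp (25/4 * \<alpha> + 100 / \<alpha>)"
    using AH_density_bounded[OF _ assms] by (simp add: AH_integrand_def)
qed

end
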